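(* Let $H$ be a hypergraph, $k$ a positive integer, and $H_1,H_2$ hypergraphs with $H=H_1\cup H_2$, and let $S$ be a set with $V(H_1)\cap V(H_2)\subseteq S$ and $S\subseteq V(H_1)\cap V(H_2)$. Let $A_1,\dots,A_k\in tr_S(i(H))$ be such that $A_1\cup\dots\cup A_k\supseteq S$. Then the following are equivalent: (1) $f_H^S(A_1,\dots,A_k)=1$; (2) there exist $A_i^j\in tr_S(i(H_j))$ for $i\in[k]$, $j\in[2]$ such that $A_i\subseteq A_i^1\cap A_i^2$ for all $i$, and $f_{H_j}^S(A_1^j,\dots,A_k^j)=1$ for $j=1,2$.
   Context: A hypergraph $H$ has a finite vertex set $V(H)$ and a set $E(H)$ of subsets of $V(H)$. A set of vertices is independent if it contains no edge; $i(H)$ is the family of inclusion-wise maximal independent sets of $H$. $H=H_1\cup H_2$ means $V(H)=V(H_1)\cup V(H_2)$ and $E(H)=E(H_1)\cup E(H_2)$. For a family $\mathcal{F}$, $tr_S(\mathcal{F})=\{F\cap S:F\in\mathcal{F}\}$. For a hypergraph $H$ and $S\subseteq V(H)$, define $f_H^S(A_1,\dots,A_k)=1$ if $A_1\cup\dots\cup A_k\supseteq S$ and there exist $I_1,\dots,I_k\in i(H)$ with $I_1\cup\dots\cup I_k=V(H)$ and $A_i\subseteq I_i$ for all $i$; and $f_H^S(A_1,\dots,A_k)=0$ otherwise. *)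

theory Defs
  imports Main
begin

definition hypergraph :: "'a set \<Rightarrow> 'a set set \<Rightarrow> bool" where
  "hypergraph V E \<longleftrightarrow> finite V \<and> (\<forall>e\<in>E. e \<subseteq> V)"

definition independent :: "'a set \<Rightarrow> 'a set set \<Rightarrow> 'a set \<Rightarrow> bool" where
  "independent V E I \<longleftrightarrow> I \<subseteq> V \<and> (\<forall>e\<in>E. \<not> e \<subseteq> I)"

definition max_indep :: "'a set \<Rightarrow> 'a set set \<Rightarrow> 'a set set" where
  "max_indep V E = {I. independent V E I \<and> (\<forall>J. independent V E J \<and> I \<subseteq> J \<longrightarrow> J = I)}"

definition tr :: "'a set \<Rightarrow> 'a set set \<Rightarrow> 'a set set" where
  "tr S F = (\<lambda>X. X \<inter> S) ` F"

definition fHS :: "'a set \<Rightarrow> 'a set set \<Rightarrow> 'a set \<Rightarrow> nat \<Rightarrow> (nat \<Rightarrow> 'a set) \<Rightarrow> nat" where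
  "fHS V E S k A = (if S \<subseteq> (\<Union>i\<in>{1..k}. A i) \<and>
      (\<exists>I. (\<forall>i\<in>{1..k}. I i \<in> max_indep V E \<and> A i \<subseteq> I i) \<and> (\<Union>i\<in>{1..k}. I i) = V)
    then 1 else 0)"

end

theory Submission
  imports Defs
begin

text \<open>A cover of H = H1 \<union> H2 by maximal independent sets restricts on each side to independent
  sets that still cover, and these extend to covers of Hj by maximal independent sets. Conversely,
  every vertex outside S lies in only one part, so an independent set of H1 and one of H2 that both
  contain A_i glue outside S into an independent set of H; enlarging the glued sets to maximal ones
  gives a cover of H.\<close>

definition max_indep_cover :: "'a set \<Rightarrow> 'a set set \<Rightarrow> nat \<Rightarrow> (nat \<Rightarrow> 'a set) \<Rightarrow> bool" where
  "max_indep_cover V E k I \<longleftrightarrow> (\<forall>i\<in>{1..k}. I i \<in> max_indep V E) \<and> (\<Union>i\<in>{1..k}. I i) = V"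

lemma max_indep_coverD:
  assumes "max_indep_cover V E k I" and "i \<in> {1..k}"
  shows "I i \<in> max_indep V E"
  using assms unfolding max_indep_cover_def by simp

lemma max_indep_cover_Union: "max_indep_cover V E k I \<Longrightarrow> (\<Union>i\<in>{1..k}. I i) = V"
  unfolding max_indep_cover_def by (rule conjunct2)

lemma fHS_eq_1_iff:
  "fHS V E S k A = 1 \<longleftrightarrow>
     S \<subseteq> (\<Union>i\<in>{1..k}. A i) \<and> (\<exists>I. max_indep_cover V E k I \<and> (\<forall>i\<in>{1..k}. A i \<subseteq> I i))"
  unfolding fHS_def max_indep_cover_def by simp blast

lemma max_indep_imp_independent: "I \<in> max_indep V E \<Longrightarrow> independent V E I"
  by (simp add: max_indep_def)

lemma max_indep_subset: "I \<in> max_indep V E \<Longrightarrow> I \<subseteq> V"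
  by (simp add: max_indep_def independent_def)

lemma independent_subset: "independent V E J \<Longrightarrow> I \<subseteq> J \<Longrightarrow> independent V E I"
  unfolding independent_def by blast

lemma independent_Un_iff:
  assumes "\<forall>e\<in>E1. e \<subseteq> V1" and "\<forall>e\<in>E2. e \<subseteq> V2"
  shows "independent (V1 \<union> V2) (E1 \<union> E2) I \<longleftrightarrow>
           I \<subseteq> V1 \<union> V2 \<and> independent V1 E1 (I \<inter> V1) \<and> independent V2 E2 (I \<inter> V2)"
  using assms unfolding independent_def by (auto simp: subset_iff)

lemma independent_extends_to_max_indep:
  assumes "finite V" and "independent V E I"
  shows "\<exists>J\<in>max_indep V E. I \<subseteq> J"
proof -
  let ?C = "{J. independent V E J \<and> I \<subseteq> J}"
  have "?C \<subseteq> Pow V"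
    by (auto simp: independent_def)
  then have "finite ?C"
    using assms(1) finite_subset by blast
  moreover have "I \<in> ?C"
    using assms(2) by simp
  ultimately obtain J where "J \<in> ?C" and "\<forall>J'\<in>?C. J \<subseteq> J' \<longrightarrow> J = J'"
    by (meson finite_has_maximal2)
  then have "J \<in> max_indep V E" and "I \<subseteq> J"
    unfolding max_indep_def by auto
  then show ?thesis
    by blast
qed

lemma independent_cover_extends_to_max_indep_cover:
  assumes "finite V" and "\<forall>i\<in>{1..k}. independent V E (K i)" and "V \<subseteq> (\<Union>i\<in>{1..k}. K i)"
  obtains I where "max_indep_cover V E k I" and "\<forall>i\<in>{1..k}. K i \<subseteq> I i"
proof -
  have "\<forall>i\<in>{1..k}. \<exists>J. J \<in> max_indep V E \<and> K i \<subseteq> J"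
    using independent_extends_to_max_indep[OF assms(1)] assms(2) by blast
  from bchoice[OF this] obtain I where I: "\<forall>i\<in>{1..k}. I i \<in> max_indep V E \<and> K i \<subseteq> I i"
    by blast
  then have I_max: "\<forall>i\<in>{1..k}. I i \<in> max_indep V E" and K_sub: "\<forall>i\<in>{1..k}. K i \<subseteq> I i"
    by simp_all
  have "(\<Union>i\<in>{1..k}. I i) = V"
  proof
    show "(\<Union>i\<in>{1..k}. I i) \<subseteq> V"
    proof (rule UN_least)
      fix i assume "i \<in> {1..k}"
      with I_max have "I i \<in> max_indep V E" ..
      then show "I i \<subseteq> V"
        by (rule max_indep_subset)
    qed
    have "(\<Union>i\<in>{1..k}. K i) \<subseteq> (\<Union>i\<in>{1..k}. I i)"
      using K_sub by (intro UN_mono) auto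
    with assms(3) show "V \<subseteq> (\<Union>i\<in>{1..k}. I i)"
      by (rule order_trans)
  qed
  with I_max have "max_indep_cover V E k I"
    unfolding max_indep_cover_def by blast
  then show thesis
    using K_sub by (rule that)
qed

lemma independent_restrict: "independent V E I \<Longrightarrow> E' \<subseteq> E \<Longrightarrow> independent V' E' (I \<inter> V')"
  unfolding independent_def by blast

lemma max_indep_cover_restrict:
  assumes "max_indep_cover V E k I" and "finite V'" and "V' \<subseteq> V" and "E' \<subseteq> E"
  obtains J where "max_indep_cover V' E' k J" and "\<forall>i\<in>{1..k}. I i \<inter> V' \<subseteq> J i"
proof (rule independent_cover_extends_to_max_indep_cover[OF assms(2)])
  show "\<forall>i\<in>{1..k}. independent V' E' (I i \<inter> V')"
  proof
    fix i assume "i \<in> {1..k}"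
    with assms(1) have "independent V E (I i)"
      by (intro max_indep_imp_independent max_indep_coverD)
    then show "independent V' E' (I i \<inter> V')"
      using assms(4) by (rule independent_restrict)
  qed
  have "(\<Union>i\<in>{1..k}. I i \<inter> V') = V \<inter> V'"
    using max_indep_cover_Union[OF assms(1)] by auto
  with assms(3) show "V' \<subseteq> (\<Union>i\<in>{1..k}. I i \<inter> V')"
    by auto
qed (rule that)

lemma independent_glue:
  assumes "hypergraph V1 E1" and "hypergraph V2 E2" and "V1 \<inter> V2 \<subseteq> S"
    and "independent V1 E1 J1" and "independent V2 E2 J2" and "A \<subseteq> J1 \<inter> J2"
  shows "independent (V1 \<union> V2) (E1 \<union> E2) ((J1 - S) \<union> (J2 - S) \<union> A)"
    (is "independent _ _ ?K")
proof -
  have J: "J1 \<subseteq> V1" "J2 \<subseteq> V2"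
    using assms(4,5) by (auto simp: independent_def)
  then have "?K \<subseteq> V1 \<union> V2"
    using assms(6) by blast
  moreover have "independent V1 E1 (?K \<inter> V1)"
    using assms(4) by (rule independent_subset) (use J assms(3,6) in blast)
  moreover have "independent V2 E2 (?K \<inter> V2)"
    using assms(5) by (rule independent_subset) (use J assms(3,6) in blast)
  moreover have "\<forall>e\<in>E1. e \<subseteq> V1" and "\<forall>e\<in>E2. e \<subseteq> V2"
    using assms(1,2) by (auto simp: hypergraph_def)
  ultimately show ?thesis
    by (simp add: independent_Un_iff)
qed

lemma fHS_Un_imp_fHS_parts:
  assumes "hypergraph V1 E1" and "hypergraph V2 E2" and "S \<subseteq> V1 \<inter> V2"
    and "\<forall>i\<in>{1..k}. A i \<subseteq> S" and "fHS (V1 \<union> V2) (E1 \<union> E2) S k A = 1"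
  shows "\<exists>A1 A2. (\<forall>i\<in>{1..k}. A1 i \<in> tr S (max_indep V1 E1) \<and> A2 i \<in> tr S (max_indep V2 E2)
                              \<and> A i \<subseteq> A1 i \<inter> A2 i)
           \<and> fHS V1 E1 S k A1 = 1 \<and> fHS V2 E2 S k A2 = 1"
proof -
  obtain I where I: "max_indep_cover (V1 \<union> V2) (E1 \<union> E2) k I" and AI: "\<forall>i\<in>{1..k}. A i \<subseteq> I i"
    and SA: "S \<subseteq> (\<Union>i\<in>{1..k}. A i)"
    using assms(5) unfolding fHS_eq_1_iff by blast
  have "finite V1" and "finite V2"
    using assms(1,2) by (simp_all add: hypergraph_def)
  obtain J1 where J1: "max_indep_cover V1 E1 k J1" and IJ1: "\<forall>i\<in>{1..k}. I i \<inter> V1 \<subseteq> J1 i"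
    using max_indep_cover_restrict[OF I \<open>finite V1\<close> Un_upper1 Un_upper1] .
  obtain J2 where J2: "max_indep_cover V2 E2 k J2" and IJ2: "\<forall>i\<in>{1..k}. I i \<inter> V2 \<subseteq> J2 i"
    using max_indep_cover_restrict[OF I \<open>finite V2\<close> Un_upper2 Un_upper2] .
  define A1 where "A1 i = J1 i \<inter> S" for i
  define A2 where "A2 i = J2 i \<inter> S" for i
  have A_sub: "A i \<subseteq> A1 i \<inter> A2 i" if "i \<in> {1..k}" for i
    using AI IJ1 IJ2 assms(3,4) that unfolding A1_def A2_def by blast
  have A_tr: "A1 i \<in> tr S (max_indep V1 E1) \<and> A2 i \<in> tr S (max_indep V2 E2)" if "i \<in> {1..k}" for i
    using max_indep_coverD[OF J1 that] max_indep_coverD[OF J2 that] unfolding A1_def A2_def tr_def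
    by simp
  have "(\<Union>i\<in>{1..k}. A i) \<subseteq> (\<Union>i\<in>{1..k}. A1 i)" and "(\<Union>i\<in>{1..k}. A i) \<subseteq> (\<Union>i\<in>{1..k}. A2 i)"
    using A_sub by (intro UN_mono; auto)+
  then have "S \<subseteq> (\<Union>i\<in>{1..k}. A1 i)" and "S \<subseteq> (\<Union>i\<in>{1..k}. A2 i)"
    using SA by (auto intro: order_trans)
  moreover have "\<forall>i\<in>{1..k}. A1 i \<subseteq> J1 i" and "\<forall>i\<in>{1..k}. A2 i \<subseteq> J2 i"
    unfolding A1_def A2_def by auto
  ultimately have "fHS V1 E1 S k A1 = 1" and "fHS V2 E2 S k A2 = 1"
    using J1 J2 unfolding fHS_eq_1_iff by blast+
  with A_sub A_tr show ?thesis
    by blast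
qed

lemma fHS_parts_imp_fHS_Un:
  assumes "hypergraph V1 E1" and "hypergraph V2 E2" and "V1 \<inter> V2 \<subseteq> S"
    and "S \<subseteq> (\<Union>i\<in>{1..k}. A i)" and "\<forall>i\<in>{1..k}. A i \<subseteq> A1 i \<inter> A2 i"
    and "fHS V1 E1 S k A1 = 1" and "fHS V2 E2 S k A2 = 1"
  shows "fHS (V1 \<union> V2) (E1 \<union> E2) S k A = 1"
proof -
  obtain J1 where J1: "max_indep_cover V1 E1 k J1" and AJ1: "\<forall>i\<in>{1..k}. A1 i \<subseteq> J1 i"
    using assms(6) unfolding fHS_eq_1_iff by blast
  obtain J2 where J2: "max_indep_cover V2 E2 k J2" and AJ2: "\<forall>i\<in>{1..k}. A2 i \<subseteq> J2 i"
    using assms(7) unfolding fHS_eq_1_iff by blast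
  define K where "K i = (J1 i - S) \<union> (J2 i - S) \<union> A i" for i
  have "\<forall>i\<in>{1..k}. independent (V1 \<union> V2) (E1 \<union> E2) (K i)"
  proof
    fix i assume i: "i \<in> {1..k}"
    have "independent V1 E1 (J1 i)" and "independent V2 E2 (J2 i)"
      using max_indep_coverD[OF J1 i] max_indep_coverD[OF J2 i] by (simp_all add: max_indep_imp_independent)
    moreover have "A i \<subseteq> J1 i \<inter> J2 i"
      using AJ1 AJ2 assms(5) i by blast
    ultimately show "independent (V1 \<union> V2) (E1 \<union> E2) (K i)"
      unfolding K_def by (rule independent_glue[OF assms(1-3)])
  qed
  moreover have "V1 \<union> V2 \<subseteq> (\<Union>i\<in>{1..k}. K i)"
  proof
    fix x assume x: "x \<in> V1 \<union> V2"
    consider "x \<in> S" | "x \<in> V1 - S" | "x \<in> V2 - S"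
      using x by blast
    then show "x \<in> (\<Union>i\<in>{1..k}. K i)"
    proof cases
      case 1
      then show ?thesis using assms(4) unfolding K_def by auto
    next
      case 2
      then show ?thesis using max_indep_cover_Union[OF J1] unfolding K_def by auto
    next
      case 3
      then show ?thesis using max_indep_cover_Union[OF J2] unfolding K_def by auto
    qed
  qed
  moreover have "finite (V1 \<union> V2)"
    using assms(1,2) by (simp add: hypergraph_def)
  ultimately obtain I where I: "max_indep_cover (V1 \<union> V2) (E1 \<union> E2) k I" and KI: "\<forall>i\<in>{1..k}. K i \<subseteq> I i"
    using independent_cover_extends_to_max_indep_cover by metis
  have "\<forall>i\<in>{1..k}. A i \<subseteq> I i"
    using KI unfolding K_def by blast
  with I assms(4) show ?thesis
    unfolding fHS_eq_1_iff by blast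
qed

theorem mainTheorem10:
  fixes V1 V2 S :: "'a set" and E1 E2 :: "'a set set" and k :: nat and A :: "nat \<Rightarrow> 'a set"
  assumes "hypergraph V1 E1" and "hypergraph V2 E2"
    and "k > 0"
    and "V1 \<inter> V2 \<subseteq> S" and "S \<subseteq> V1 \<inter> V2"
    and "\<forall>i\<in>{1..k}. A i \<in> tr S (max_indep (V1 \<union> V2) (E1 \<union> E2))"
    and "S \<subseteq> (\<Union>i\<in>{1..k}. A i)"
  shows "fHS (V1 \<union> V2) (E1 \<union> E2) S k A = 1 \<longleftrightarrow>
    (\<exists>A1 A2. (\<forall>i\<in>{1..k}. A1 i \<in> tr S (max_indep V1 E1) \<and> A2 i \<in> tr S (max_indep V2 E2)
                 \<and> A i \<subseteq> A1 i \<inter> A2 i)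
      \<and> fHS V1 E1 S k A1 = 1 \<and> fHS V2 E2 S k A2 = 1)"
proof -
  have "\<forall>i\<in>{1..k}. A i \<subseteq> S"
    using assms(6) by (auto simp: tr_def)
  then show ?thesis
    using fHS_Un_imp_fHS_parts[OF assms(1,2,5)] fHS_parts_imp_fHS_Un[OF assms(1,2,4,7)]
    by (intro iffI) (simp, metis)
qed

end
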